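(* Assume $CA_2$. Then there is a coloring $o:[\omega_1]^2\to\omega$ such that for every uncountable family $\mathcal A\subseteq[\omega_1]^{<\omega}$ of pairwise disjoint sets and every $n\in\omega$ there are $a,b\in\mathcal A$ with $a<b$ such that $o(\alpha,\beta)=n$ for all $\alpha\in a$ and $\beta\in b$.
   Context: For finite sets of ordinals, $a<b$ means every element of $a$ is below every element of $b$. A type is a sequence $\tau=\{(m_k,n_{k+1},r_{k+1})\}_{k\in\omega}$ of natural numbers with $m_0=1$; $n_k\ge2$ for $k\ge1$; every $r\in\omega$ equals $r_k$ for infinitely many $k$; $m_k>r_{k+1}$; and $m_{k+1}=r_{k+1}+(m_k-r_{k+1})n_{k+1}$ for all $k$. For a set of ordinals $X$ and $\mathcal F\subseteq[X]^{<\omega}$, $\mathcal F_k$ is the set of elements of rank $k$ in $(\mathcal F,\subsetneq)$; $A\sqsubseteq B$ means $A\subseteq B$ and every element of $B$ below an element of $A$ is in $A$. $\mathcal F$ is a construction scheme over $X$ of type $\tau$ if (1) every finite subset of $X$ lies in a member of $\mathcal F$; (2) $|F|=m_k$ for $F\in\mathcal F_k$; (3) $E\cap F\sqsubseteq E,F$ for $E,F\in\mathcal F_k$; (4) each $F\in\mathcal F_{k+1}$ is the union of uniquely determined $F_0,\dots,F_{n_{k+1}-1}\in\mathcal F_k$ forming a $\Delta$-system with root $R(F)$, $|R(F)|=r_{k+1}$, $R(F)<F_0\setminus R(F)<\dots<F_{n_{k+1}-1}\setminus R(F)$. For a construction scheme $\mathcal F$ over $\omega_1$, $l\ge1$, $F\in\mathcal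 F_l$ and finite $\mathcal C\subseteq[\omega_1]^{<\omega}$: $F$ captures $\mathcal C$ if $|\mathcal C|\le n_l$ and $\mathcal C$ can be enumerated as $\{c_i\}_{i<|\mathcal C|}$ with $c_i\subseteq F_i$, $c_i\setminus R(F)\neq\emptyset$ and $\phi_i[c_0]=c_i$ where $\phi_i:F_0\to F_i$ is the increasing bijection. $\mathcal F$ is $n$-capturing if for every uncountable $S\subseteq[\omega_1]^{<\omega}$ and every $k\in\omega$ there are $\mathcal C\in[S]^n$, $l>k$ and $F\in\mathcal F_l$ capturing $\mathcal C$. $CA_n$ is the statement: for every type $\tau$ with $n\le n_k$ for all $k\ge1$ there is an $n$-capturing construction scheme over $\omega_1$ of type $\tau$. *)

theory Defs
  imports Main "HOL-Library.Countable_Set"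
begin

section \<open>omega_1, represented by an abstract well-order of order type omega_1\<close>

text \<open>A well-order w is of order type omega_1 iff its field is uncountable and every
  proper initial segment is countable. All such well-orders are isomorphic to omega_1.\<close>
definition omega1_order :: "'a rel \<Rightarrow> bool" where
  "omega1_order w \<longleftrightarrow> Well_order w \<and> \<not> countable (Field w)
     \<and> (\<forall>\<alpha>\<in>Field w. countable (underS w \<alpha>))"

definition olt :: "'a rel \<Rightarrow> 'a \<Rightarrow> 'a \<Rightarrow> bool" where
  "olt w a b \<longleftrightarrow> (a, b) \<in> w \<and> a \<noteq> b"

definition set_lt :: "'a rel \<Rightarrow> 'a set \<Rightarrow> 'a set \<Rightarrow> bool" where
  "set_lt w A B \<longleftrightarrow> (\<forall>x\<in>A. \<forall>y\<in>B. olt w x y)"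

definition init_seg :: "'a rel \<Rightarrow> 'a set \<Rightarrow> 'a set \<Rightarrow> bool" where
  "init_seg w A B \<longleftrightarrow> A \<subseteq> B \<and> (\<forall>x\<in>B. \<forall>y\<in>A. olt w x y \<longrightarrow> x \<in> A)"

text \<open>A type is the sequence (m k, n (k+1), r (k+1)) for k in omega; the values n 0 and
  r 0 are not part of the type and are ignored.\<close>
definition is_type :: "(nat \<Rightarrow> nat) \<Rightarrow> (nat \<Rightarrow> nat) \<Rightarrow> (nat \<Rightarrow> nat) \<Rightarrow> bool" where
  "is_type m n r \<longleftrightarrow> m 0 = 1
     \<and> (\<forall>k\<ge>1. n k \<ge> 2)
     \<and> (\<forall>j::nat. infinite {k. k \<ge> 1 \<and> r k = j})
     \<and> (\<forall>k. m k > r (k + 1))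
     \<and> (\<forall>k. m (k + 1) = r (k + 1) + (m k - r (k + 1)) * n (k + 1))"

definition rank_in :: "'a set set \<Rightarrow> 'a set \<Rightarrow> nat" where
  "rank_in F = wfrec finite_psubset
     (\<lambda>rec E. Max (insert 0 {rec D + 1 | D. D \<in> F \<and> D \<subset> E}))"

definition level :: "'a set set \<Rightarrow> nat \<Rightarrow> 'a set set" where
  "level F k = {E \<in> F. rank_in F E = k}"

definition decomp :: "'a rel \<Rightarrow> 'a set set \<Rightarrow> (nat \<Rightarrow> nat) \<Rightarrow> (nat \<Rightarrow> nat) \<Rightarrow> nat
    \<Rightarrow> 'a set \<Rightarrow> 'a set list \<Rightarrow> 'a set \<Rightarrow> bool" where
  "decomp w F n r k E Fs R \<longleftrightarrow>
     length Fs = n (k + 1)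
     \<and> (\<forall>i < length Fs. Fs ! i \<in> level F k)
     \<and> E = \<Union> (set Fs)
     \<and> (\<forall>i j. i < length Fs \<and> j < length Fs \<and> i \<noteq> j \<longrightarrow> Fs ! i \<inter> Fs ! j = R)
     \<and> card R = r (k + 1)
     \<and> set_lt w R (Fs ! 0 - R)
     \<and> (\<forall>i. i + 1 < length Fs \<longrightarrow> set_lt w (Fs ! i - R) (Fs ! (i + 1) - R))"

definition construction_scheme :: "'a rel \<Rightarrow> 'a set set \<Rightarrow>
    (nat \<Rightarrow> nat) \<Rightarrow> (nat \<Rightarrow> nat) \<Rightarrow> (nat \<Rightarrow> nat) \<Rightarrow> bool" where
  "construction_scheme w F m n r \<longleftrightarrow>
     (\<forall>E\<in>F. finite E \<and> E \<subseteq> Field w)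
     \<and> (\<forall>A. finite A \<and> A \<subseteq> Field w \<longrightarrow> (\<exists>E\<in>F. A \<subseteq> E))
     \<and> (\<forall>k. \<forall>E\<in>level F k. card E = m k)
     \<and> (\<forall>k. \<forall>E\<in>level F k. \<forall>E'\<in>level F k.
           init_seg w (E \<inter> E') E \<and> init_seg w (E \<inter> E') E')
     \<and> (\<forall>k. \<forall>E\<in>level F (k + 1). \<exists>!Fs. \<exists>R. decomp w F n r k E Fs R)"

definition incr_bij :: "'a rel \<Rightarrow> ('a \<Rightarrow> 'a) \<Rightarrow> 'a set \<Rightarrow> 'a set \<Rightarrow> bool" where
  "incr_bij w \<phi> A B \<longleftrightarrow> bij_betw \<phi> A B \<and> (\<forall>x\<in>A. \<forall>y\<in>A. olt w x y \<longrightarrow> olt w (\<phi> x) (\<phi> y))"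

definition captures :: "'a rel \<Rightarrow> 'a set set \<Rightarrow> (nat \<Rightarrow> nat) \<Rightarrow> (nat \<Rightarrow> nat)
    \<Rightarrow> nat \<Rightarrow> 'a set \<Rightarrow> 'a set set \<Rightarrow> bool" where
  "captures w F n r l E C \<longleftrightarrow> l \<ge> 1 \<and> E \<in> level F l \<and> finite C \<and> card C \<le> n l
     \<and> (\<exists>Fs R. decomp w F n r (l - 1) E Fs R
        \<and> (\<exists>cs. distinct cs \<and> set cs = C
              \<and> (\<forall>i < length cs. cs ! i \<subseteq> Fs ! i \<and> cs ! i - R \<noteq> {}
                   \<and> (\<exists>\<phi>. incr_bij w \<phi> (Fs ! 0) (Fs ! i) \<and> \<phi> ` (cs ! 0) = cs ! i))))"

definition n_capturing :: "nat \<Rightarrow> 'a rel \<Rightarrow> 'a set set \<Rightarrow> (nat \<Rightarrow> nat) \<Rightarrow> (nat \<Rightarrow> nat) \<Rightarrow> bool" where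
  "n_capturing q w F n r \<longleftrightarrow>
     (\<forall>S. (\<forall>s\<in>S. finite s \<and> s \<subseteq> Field w) \<and> \<not> countable S \<longrightarrow>
        (\<forall>k. \<exists>C l E. C \<subseteq> S \<and> finite C \<and> card C = q \<and> l > k \<and> E \<in> level F l
                   \<and> captures w F n r l E C))"

definition CA :: "nat \<Rightarrow> 'a rel \<Rightarrow> bool" where
  "CA q w \<longleftrightarrow> (\<forall>m n r. is_type m n r \<and> (\<forall>k\<ge>1. q \<le> n k) \<longrightarrow>
      (\<exists>F. construction_scheme w F m n r \<and> n_capturing q w F n r))"

end

(* Take a 2-capturing scheme in which every member of level k + 1 is the union of two halves
   F_0, F_1 over a root R. For alpha < beta let l = rho(alpha, beta) be the first level at which
   they lie in a common member; then alpha is in F_0 - R and beta in F_1 - R. Let beta' be the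
   copy of beta in F_0 under the increasing bijection. If beta' < alpha, repeat with the pair
   (beta', alpha) at a lower level, otherwise stop; the colour of {alpha, beta} is the number of
   repetitions.

   Given an uncountable disjoint family AA, build by induction on c an uncountable family of
   frames (hull, lo, hi) with pairwise disjoint finite hulls, where lo < hi are members of AA
   inside the hull and every alpha in lo, beta in hi get colour c. Capture two frames p_0, p_1
   of the same shape in the two halves of some member. The pair (lo p_0, hi p_1) gets colour 0,
   since the copy of beta lies in hi p_0, above alpha; the pair (hi p_0, lo p_1) gets one more
   than (lo p_0, hi p_0), since the copy of beta lies in lo p_0, below alpha. As this works away
   from any countable set, a maximal disjoint family of such new frames is uncountable. *)

theory Submission
  imports Defs
begin

section \<open>Positions in finite sets of ordinals\<close>

lemma olt_trans: "Well_order w \<Longrightarrow> olt w a b \<Longrightarrow> olt w b c \<Longrightarrow> olt w a c"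
  unfolding olt_def order_on_defs by (metis antisymD transD)

lemma olt_asym: "Well_order w \<Longrightarrow> olt w a b \<Longrightarrow> \<not> olt w b a"
  unfolding olt_def order_on_defs by (metis antisymD)

lemma olt_irrefl: "\<not> olt w a a"
  unfolding olt_def by simp

lemma olt_total:
  "Well_order w \<Longrightarrow> a \<in> Field w \<Longrightarrow> b \<in> Field w \<Longrightarrow> a \<noteq> b \<Longrightarrow> olt w a b \<or> olt w b a"
  unfolding olt_def order_on_defs by (metis total_on_def)

lemma olt_Field: "olt w a b \<Longrightarrow> a \<in> Field w \<and> b \<in> Field w"
  unfolding olt_def by (auto intro: FieldI1 FieldI2)

definition pos :: "'a rel \<Rightarrow> 'a set \<Rightarrow> 'a \<Rightarrow> nat" where
  "pos w A x = card {z\<in>A. olt w z x}"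

lemma pos_strict_mono:
  assumes "Well_order w" "finite A" "x \<in> A" "olt w x y"
  shows "pos w A x < pos w A y"
proof -
  have "{z\<in>A. olt w z x} \<subseteq> {z\<in>A. olt w z y}"
    using olt_trans[OF assms(1) _ assms(4)] by blast
  moreover have "x \<in> {z\<in>A. olt w z y} - {z\<in>A. olt w z x}"
    using assms(3,4) olt_irrefl by fast
  ultimately have "{z\<in>A. olt w z x} \<subset> {z\<in>A. olt w z y}" by blast
  then show ?thesis
    unfolding pos_def using assms(2) by (simp add: psubset_card_mono)
qed

lemma pos_inj:
  assumes wo: "Well_order w" and A: "finite A" "A \<subseteq> Field w"
  shows "inj_on (pos w A) A"
proof (rule inj_onI, rule ccontr)
  fix x y assume xy: "x \<in> A" "y \<in> A" "pos w A x = pos w A y" "x \<noteq> y"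
  then have "olt w x y \<or> olt w y x" using olt_total[OF wo] A by blast
  then show False using pos_strict_mono[OF wo A(1)] xy by fastforce
qed

lemma pos_incr_bij:
  assumes wo: "Well_order w" and \<phi>: "incr_bij w \<phi> A B" and A: "A \<subseteq> Field w" and u: "u \<in> A"
  shows "pos w B (\<phi> u) = pos w A u"
proof -
  have inj: "inj_on \<phi> A" and B: "B = \<phi> ` A"
    and mono: "\<And>x y. x \<in> A \<Longrightarrow> y \<in> A \<Longrightarrow> olt w x y \<Longrightarrow> olt w (\<phi> x) (\<phi> y)"
    using \<phi> unfolding incr_bij_def bij_betw_def by auto
  have "\<not> olt w (\<phi> v) (\<phi> u)" if "v \<in> A" "\<not> olt w v u" for v
  proof (cases "v = u")
    case False
    then have "olt w u v" using olt_total[OF wo] A u that by blast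
    then show ?thesis using mono u that olt_asym[OF wo] by blast
  qed (simp add: olt_irrefl)
  then have "{z\<in>B. olt w z (\<phi> u)} = \<phi> ` {z\<in>A. olt w z u}"
    using B mono u by blast
  moreover have "inj_on \<phi> {z\<in>A. olt w z u}" using inj by (rule inj_on_subset) blast
  ultimately show ?thesis
    unfolding pos_def by (simp add: card_image)
qed

lemma incr_bij_restrict:
  assumes "incr_bij w \<phi> A B" "C \<subseteq> A"
  shows "incr_bij w \<phi> C (\<phi> ` C)"
  using assms unfolding incr_bij_def bij_betw_def by (auto intro: inj_on_subset)

lemma incr_bij_image_eq_if_pos_eq:
  assumes wo: "Well_order w" and \<phi>: "incr_bij w \<phi> A B"
    and A: "A \<subseteq> Field w" and B: "finite B" "B \<subseteq> Field w"
    and C: "C \<subseteq> A" and D: "D \<subseteq> B" and eq: "pos w A ` C = pos w B ` D"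
  shows "\<phi> ` C = D"
proof -
  have B_eq: "B = \<phi> ` A" using \<phi> unfolding incr_bij_def bij_betw_def by auto
  have pos_eq: "pos w B (\<phi> x) = pos w A x" if "x \<in> C" for x
    using pos_incr_bij[OF wo \<phi> A] that C by blast
  have "pos w B ` \<phi> ` C = pos w A ` C"
    unfolding image_image by (rule image_cong) (simp_all add: pos_eq)
  then have "pos w B ` \<phi> ` C = pos w B ` D" using eq by simp
  moreover have "\<phi> ` C \<subseteq> B" using B_eq C by blast
  ultimately show ?thesis
    using inj_on_image_eq_iff[OF pos_inj[OF wo B] _ D] by simp
qed

section \<open>A type with all \<open>n k = 2\<close>\<close>

text \<open>\<open>root_seq\<close> takes every value infinitely often because \<open>prod_decode\<close> enumerates
  all pairs.\<close>

definition root_seq :: "nat \<Rightarrow> nat" where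
  "root_seq k = (if k = 0 then 0 else fst (prod_decode (k - 1)))"

fun size_seq :: "nat \<Rightarrow> nat" where
  "size_seq 0 = 1"
| "size_seq (Suc k) = 2 * size_seq k - root_seq (Suc k)"

lemma root_seq_Suc_le: "root_seq (Suc k) \<le> k"
proof -
  obtain a b where ab: "prod_decode k = (a, b)" by fastforce
  then have "a \<le> k" by (metis le_prod_encode_1 prod_decode_inverse)
  then show ?thesis using ab by (simp add: root_seq_def)
qed

lemma size_seq_ge: "size_seq k \<ge> k + 1"
proof (induction k)
  case (Suc k)
  then show ?case using root_seq_Suc_le[of k] by simp
qed simp

lemma root_seq_infinite: "infinite {k. k \<ge> 1 \<and> root_seq k = j}"
proof -
  have "inj (\<lambda>b. Suc (prod_encode (j, b)))" by (auto simp: inj_on_def)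
  then have "infinite (range (\<lambda>b. Suc (prod_encode (j, b))))" by (rule range_inj_infinite)
  moreover have "range (\<lambda>b. Suc (prod_encode (j, b))) \<subseteq> {k. k \<ge> 1 \<and> root_seq k = j}"
    by (auto simp: root_seq_def)
  ultimately show ?thesis using finite_subset by blast
qed

lemma is_type_binary: "is_type size_seq (\<lambda>_. 2) root_seq"
  unfolding is_type_def
proof (intro conjI allI impI)
  fix k
  show "root_seq (k + 1) < size_seq k" using root_seq_Suc_le[of k] size_seq_ge[of k] by simp
  show "size_seq (k + 1) = root_seq (k + 1) + (size_seq k - root_seq (k + 1)) * 2"
    using root_seq_Suc_le[of k] size_seq_ge[of k] by simp
qed (use root_seq_infinite in auto)

section \<open>Uncountable disjoint families\<close>

lemma countable_meeting_disjoint: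
  assumes "pairwise (\<lambda>p q. disjnt (f p) (f q)) T" "countable D"
  shows "countable {p\<in>T. f p \<inter> D \<noteq> {}}"
proof -
  have "countable {p\<in>T. d \<in> f p}" for d
  proof (cases "\<exists>p\<in>T. d \<in> f p")
    case True
    then obtain p where "p \<in> T" "d \<in> f p" by blast
    then have "{p\<in>T. d \<in> f p} \<subseteq> {p}" using assms(1) by (auto simp: pairwise_def disjnt_def)
    then show ?thesis by (rule countable_subset) simp
  next
    case False
    then have "{p\<in>T. d \<in> f p} = {}" by blast
    then show ?thesis by (simp only: countable_empty)
  qed
  moreover have "{p\<in>T. f p \<inter> D \<noteq> {}} = (\<Union>d\<in>D. {p\<in>T. d \<in> f p})" by blast
  ultimately show ?thesis using assms(2) by simp
qed

lemma uncountable_avoiding_disjoint: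
  assumes "pairwise (\<lambda>p q. disjnt (f p) (f q)) T" "countable D" "\<not> countable T"
  shows "\<not> countable {p\<in>T. f p \<inter> D = {}}"
proof
  assume "countable {p\<in>T. f p \<inter> D = {}}"
  then have "countable ({p\<in>T. f p \<inter> D = {}} \<union> {p\<in>T. f p \<inter> D \<noteq> {}})"
    using countable_meeting_disjoint[OF assms(1,2)] by simp
  moreover have "{p\<in>T. f p \<inter> D = {}} \<union> {p\<in>T. f p \<inter> D \<noteq> {}} = T" by blast
  ultimately show False using assms(3) by simp
qed

lemma uncountable_fiber:
  assumes "\<not> countable T" "countable (g ` T)"
  obtains v where "\<not> countable {p\<in>T. g p = v}"
proof -
  have "T = (\<Union>v\<in>g ` T. {p\<in>T. g p = v})" by blast
  then show ?thesis using assms that by (metis (no_types, lifting) countable_UN)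
qed

lemma uncountable_disjoint_subfamily:
  assumes ne: "\<And>p. p \<in> X \<Longrightarrow> f p \<noteq> {} \<and> countable (f p)"
    and avoid: "\<And>Z. countable Z \<Longrightarrow> \<exists>p\<in>X. f p \<inter> Z = {}"
  obtains M where "M \<subseteq> X" "\<not> countable M" "pairwise (\<lambda>p q. disjnt (f p) (f q)) M"
proof -
  define A where "A = {M. M \<subseteq> X \<and> pairwise (\<lambda>p q. disjnt (f p) (f q)) M}"
  have "\<forall>C\<in>chains A. \<Union>C \<in> A"
  proof
    fix C assume "C \<in> chains A"
    then have "C \<subseteq> A" "chain\<^sub>\<subseteq> C" unfolding chains_def by auto
    then show "\<Union>C \<in> A" unfolding A_def by (auto intro!: pairwise_chain_Union)
  qed
  then obtain M where M: "M \<in> A" and max: "\<forall>Y\<in>A. M \<subseteq> Y \<longrightarrow> Y = M"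
    using Zorn_Lemma by blast
  have "\<not> countable M"
  proof
    assume "countable M"
    then have "countable (\<Union>p\<in>M. f p)" using ne M unfolding A_def by blast
    then obtain p where p: "p \<in> X" "f p \<inter> (\<Union>q\<in>M. f q) = {}" using avoid by blast
    then have "insert p M \<in> A"
      using M unfolding A_def by (auto simp: pairwise_insert disjnt_def)
    then have "p \<in> M" using max by blast
    then show False using p ne by blast
  qed
  then show ?thesis using M that unfolding A_def by blast
qed

section \<open>Construction schemes with two halves at every level\<close>

locale binary_scheme =
  fixes w :: "'a rel" and F :: "'a set set" and m n r :: "nat \<Rightarrow> nat"
  assumes wo: "Well_order w" and scheme: "construction_scheme w F m n r"
    and type: "is_type m n r" and binary: "\<And>k. n k = 2"
begin

lemma level_finite: "E \<in> level F k \<Longrightarrow> finite E \<and> E \<subseteq> Field w"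
  using scheme unfolding construction_scheme_def level_def by blast

lemma level_card: "E \<in> level F k \<Longrightarrow> card E = m k"
  using scheme unfolding construction_scheme_def by blast

lemma level_Int_init_seg: "E \<in> level F k \<Longrightarrow> E' \<in> level F k \<Longrightarrow> init_seg w (E \<inter> E') E"
  using scheme unfolding construction_scheme_def by blast

lemma decomp_exists: "E \<in> level F (Suc k) \<Longrightarrow> \<exists>Fs R. decomp w F n r k E Fs R"
  using scheme unfolding construction_scheme_def by (metis Suc_eq_plus1 ex1E)

lemma pair_in_level:
  assumes "x \<in> Field w" "y \<in> Field w"
  shows "\<exists>l. \<exists>G\<in>level F l. x \<in> G \<and> y \<in> G"
proof -
  obtain E where "E \<in> F" "{x, y} \<subseteq> E"
    using scheme assms unfolding construction_scheme_def by (metis empty_subsetI finite.emptyI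
        finite_insert insert_subset)
  then show ?thesis unfolding level_def by blast
qed

text \<open>Coherence (3) at level \<open>j\<close>, propagated upwards through the half containing \<open>x\<close>.\<close>

lemma below_in_higher_level:
  assumes "G \<in> level F j" "E \<in> level F (j + d)" "x \<in> G" "x \<in> E" "\<gamma> \<in> G" "olt w \<gamma> x"
  shows "\<gamma> \<in> E"
  using assms(2,4)
proof (induction d arbitrary: E)
  case 0
  then show ?case using level_Int_init_seg[OF assms(1)] assms(3,5,6) unfolding init_seg_def by auto
next
  case (Suc d)
  then obtain Fs R where "decomp w F n r (j + d) E Fs R" using decomp_exists by fastforce
  then obtain i where "i < length Fs" "Fs ! i \<in> level F (j + d)" "x \<in> Fs ! i" "E = \<Union> (set Fs)"
    using Suc.prems(2) unfolding decomp_def by (metis UnionE in_set_conv_nth)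
  then show ?case using Suc.IH by (metis UnionI nth_mem)
qed

definition rho :: "'a \<Rightarrow> 'a \<Rightarrow> nat" where
  "rho x y = (LEAST l. \<exists>G\<in>level F l. x \<in> G \<and> y \<in> G)"

lemma rho_le: "G \<in> level F l \<Longrightarrow> x \<in> G \<Longrightarrow> y \<in> G \<Longrightarrow> rho x y \<le> l"
  unfolding rho_def by (rule Least_le) blast

lemma rho_level: "x \<in> Field w \<Longrightarrow> y \<in> Field w \<Longrightarrow> \<exists>G\<in>level F (rho x y). x \<in> G \<and> y \<in> G"
  unfolding rho_def using pair_in_level by (rule LeastI_ex)

definition below :: "nat \<Rightarrow> 'a \<Rightarrow> 'a set" where
  "below l z = {\<gamma>. olt w \<gamma> z \<and> rho \<gamma> z \<le> l}"

lemma below_eq: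
  assumes "P \<in> level F l" "z \<in> P"
  shows "below l z = {\<gamma>\<in>P. olt w \<gamma> z}"
proof
  show "{\<gamma>\<in>P. olt w \<gamma> z} \<subseteq> below l z"
    using rho_le assms unfolding below_def by blast
  show "below l z \<subseteq> {\<gamma>\<in>P. olt w \<gamma> z}"
  proof
    fix \<gamma> assume "\<gamma> \<in> below l z"
    then have \<gamma>: "olt w \<gamma> z" "rho \<gamma> z \<le> l" unfolding below_def by auto
    obtain G where G: "G \<in> level F (rho \<gamma> z)" "\<gamma> \<in> G" "z \<in> G"
      using rho_level[of \<gamma> z] olt_Field[OF \<gamma>(1)] by blast
    have "P \<in> level F (rho \<gamma> z + (l - rho \<gamma> z))" using assms(1) \<gamma>(2) by simp
    then have "\<gamma> \<in> P" using below_in_higher_level[OF G(1) _ G(3) assms(2) G(2) \<gamma>(1)] by blast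
    then show "\<gamma> \<in> {\<gamma>\<in>P. olt w \<gamma> z}" using \<gamma> by simp
  qed
qed

lemma card_below: "P \<in> level F l \<Longrightarrow> z \<in> P \<Longrightarrow> card (below l z) = pos w P z"
  unfolding pos_def by (simp add: below_eq)

lemma decomp_halves:
  assumes "decomp w F n r k E Fs R"
  shows "length Fs = 2" "Fs!0 \<in> level F k" "Fs!1 \<in> level F k"
    "E = Fs!0 \<union> Fs!1" "Fs!0 \<inter> Fs!1 = R"
proof -
  show len: "length Fs = 2" using assms binary unfolding decomp_def by simp
  then show "Fs!0 \<in> level F k" "Fs!1 \<in> level F k" "Fs!0 \<inter> Fs!1 = R"
    using assms unfolding decomp_def by auto
  have "set Fs = {Fs!0, Fs!1}" using len by (auto simp: set_conv_nth less_2_cases_iff)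
  then show "E = Fs!0 \<union> Fs!1" using assms unfolding decomp_def by simp
qed

lemma decomp_order:
  assumes "decomp w F n r k E Fs R"
  shows "set_lt w R (Fs!0 - R)" "set_lt w (Fs!0 - R) (Fs!1 - R)" "set_lt w R (Fs!1 - R)"
proof -
  note halves = decomp_halves[OF assms]
  show R0: "set_lt w R (Fs!0 - R)" using assms unfolding decomp_def by simp
  show "set_lt w (Fs!0 - R) (Fs!1 - R)" using assms halves(1) unfolding decomp_def by simp
  moreover have "Fs!0 - R \<noteq> {}"
  proof
    assume "Fs!0 - R = {}"
    then have "card (Fs!0) \<le> card R"
      using level_finite[OF halves(2)] halves(5) by (metis Diff_eq_empty_iff card_mono finite_Int)
    moreover have "card R = r (k + 1)" using assms unfolding decomp_def by simp
    moreover have "r (k + 1) < m k" using type unfolding is_type_def by blast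
    ultimately show False using level_card[OF halves(2)] by simp
  qed
  ultimately show "set_lt w R (Fs!1 - R)"
    using R0 olt_trans[OF wo] unfolding set_lt_def by blast
qed

definition halving :: "nat \<Rightarrow> 'a set \<Rightarrow> 'a set list \<Rightarrow> 'a set \<Rightarrow> ('a \<Rightarrow> 'a) \<Rightarrow> bool" where
  "halving k E Fs R \<phi> \<longleftrightarrow>
     E \<in> level F (Suc k) \<and> decomp w F n r k E Fs R \<and> incr_bij w \<phi> (Fs!0) (Fs!1)"

lemma halving_root_fixed:
  assumes "halving k E Fs R \<phi>" "x \<in> R"
  shows "\<phi> x = x"
proof -
  have dc: "decomp w F n r k E Fs R" and \<phi>: "incr_bij w \<phi> (Fs!0) (Fs!1)"
    using assms(1) unfolding halving_def by auto
  note halves = decomp_halves[OF dc] and order = decomp_order[OF dc]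
  have x: "x \<in> Fs!0" "x \<in> Fs!1" using assms(2) halves(5) by auto
  have "{z\<in>Fs!i. olt w z x} = {z\<in>R. olt w z x}" if "i = 0 \<or> i = 1" for i
    using that halves(5) order(1,3) assms(2) olt_asym[OF wo] unfolding set_lt_def by blast
  then have "pos w (Fs!1) (\<phi> x) = pos w (Fs!1) x"
    using pos_incr_bij[OF wo \<phi> _ x(1)] level_finite[OF halves(2)] unfolding pos_def by auto
  moreover have "\<phi> x \<in> Fs!1" using \<phi> x(1) unfolding incr_bij_def bij_betw_def by blast
  ultimately show ?thesis
    using pos_inj[OF wo] level_finite[OF halves(3)] x(2) by (meson inj_onD)
qed

lemma rho_halves:
  assumes E: "E \<in> level F (Suc k)" and dc: "decomp w F n r k E Fs R"
    and x: "x \<in> Fs!0 - R" and y: "y \<in> Fs!1 - R"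
  shows "rho x y = Suc k"
proof -
  note halves = decomp_halves[OF dc]
  have xy: "olt w x y" using decomp_order(2)[OF dc] x y unfolding set_lt_def by blast
  have "rho x y \<le> Suc k" using rho_le[OF E] x y halves(4) by blast
  moreover have "\<not> rho x y \<le> k"
  proof
    assume le: "rho x y \<le> k"
    obtain G where G: "G \<in> level F (rho x y)" "x \<in> G" "y \<in> G"
      using rho_level olt_Field[OF xy] by blast
    have "Fs!1 \<in> level F (rho x y + (k - rho x y))" using halves(3) le by simp
    then have "x \<in> Fs!1" using below_in_higher_level[OF G(1) _ G(3) _ G(2) xy] y by blast
    then show False using x halves(5) by blast
  qed
  ultimately show ?thesis by simp
qed

text \<open>For \<open>x < y\<close> let \<open>l = rho x y\<close>; then \<open>x\<close> and \<open>y\<close> lie in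
  the two halves of a member of level \<open>l\<close>, and \<open>card (below (l - 1) z)\<close> is the position of \<open>z\<close>
  in its half, so the \<open>THE\<close> picks the copy \<open>y'\<close> of \<open>y\<close> in the half of \<open>x\<close>. If \<open>y' < x\<close> the walk
  continues with \<open>(y', x)\<close> one level lower, otherwise it stops. The first argument is fuel:
  any value \<open>\<ge> rho x y\<close> gives the same result.\<close>

fun steps :: "nat \<Rightarrow> 'a \<Rightarrow> 'a \<Rightarrow> nat" where
  "steps 0 x y = 0"
| "steps (Suc j) x y = (let l = rho x y - 1 in
     if card (below l y) < card (below l x)
     then Suc (steps j (THE \<gamma>. \<gamma> \<in> below l x \<and> card (below l \<gamma>) = card (below l y)) x)
     else 0)"

lemma steps_halves:
  assumes h: "halving k E Fs R \<phi>" and x: "x \<in> Fs!0 - R" and y: "y \<in> Fs!1 - R"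
    and y': "y' \<in> Fs!0" "\<phi> y' = y"
  shows "olt w y' x \<Longrightarrow> steps (Suc j) x y = Suc (steps j y' x)"
    and "olt w x y' \<Longrightarrow> steps (Suc j) x y = 0"
proof -
  have E: "E \<in> level F (Suc k)" and dc: "decomp w F n r k E Fs R"
    and \<phi>: "incr_bij w \<phi> (Fs!0) (Fs!1)"
    using h unfolding halving_def by auto
  note halves = decomp_halves[OF dc]
  have F0: "finite (Fs!0)" "Fs!0 \<subseteq> Field w" using level_finite[OF halves(2)] by auto
  have l: "rho x y - 1 = k" using rho_halves[OF E dc x y] by simp
  have card_x: "card (below k x) = pos w (Fs!0) x" using card_below[OF halves(2)] x by blast
  have card_y: "card (below k y) = pos w (Fs!0) y'"
    using card_below[OF halves(3)] y pos_incr_bij[OF wo \<phi> F0(2) y'(1)] y'(2) by auto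
  show "steps (Suc j) x y = Suc (steps j y' x)" if "olt w y' x"
  proof -
    have "(THE \<gamma>. \<gamma> \<in> below k x \<and> card (below k \<gamma>) = card (below k y)) = y'"
    proof (rule the_equality)
      show "y' \<in> below k x \<and> card (below k y') = card (below k y)"
        using below_eq[OF halves(2)] card_below[OF halves(2)] x y'(1) that card_y by auto
    next
      fix \<gamma> assume \<gamma>: "\<gamma> \<in> below k x \<and> card (below k \<gamma>) = card (below k y)"
      then have "\<gamma> \<in> Fs!0" using below_eq[OF halves(2)] x by blast
      then show "\<gamma> = y'"
        using \<gamma> card_below[OF halves(2)] card_y pos_inj[OF wo F0] y'(1) by (metis inj_onD)
    qed
    then show ?thesis
      using l card_x card_y pos_strict_mono[OF wo F0(1) y'(1) that] by (simp add: Let_def)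
  qed
  show "steps (Suc j) x y = 0" if "olt w x y'"
    using l card_x card_y pos_strict_mono[OF wo F0(1) _ that] x by (simp add: Let_def)
qed

definition colouring :: "'a set \<Rightarrow> nat" where
  "colouring s = (SOME c. \<forall>x y. olt w x y \<and> s = {x, y} \<longrightarrow> c = steps (rho x y) x y)"

lemma colouring_eq:
  assumes "olt w a b"
  shows "colouring {a, b} = steps (rho a b) a b"
proof -
  define P where "P c \<longleftrightarrow> (\<forall>x y. olt w x y \<and> {a, b} = {x, y} \<longrightarrow> c = steps (rho x y) x y)" for c
  have "x = a \<and> y = b" if "olt w x y" "{a, b} = {x, y}" for x y
    using that assms olt_asym[OF wo] by (auto simp: doubleton_eq_iff)
  then have "P (steps (rho a b) a b)" unfolding P_def by (metis (no_types, lifting))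
  then have "P (colouring {a, b})" unfolding colouring_def P_def[symmetric] by (rule someI)
  then show ?thesis using assms unfolding P_def by blast
qed

end

locale capturing_scheme = binary_scheme +
  assumes capturing: "n_capturing 2 w F n r"
begin

lemma capture_disjoint_pair:
  assumes S: "\<forall>s\<in>S. finite s \<and> s \<subseteq> Field w" "\<not> countable S" "pairwise disjnt S"
  obtains s0 s1 k E Fs R \<phi> where "s0 \<in> S" "s1 \<in> S" "halving k E Fs R \<phi>"
    "s0 \<subseteq> Fs!0 - R" "s1 \<subseteq> Fs!1 - R" "\<phi> ` s0 = s1"
proof -
  have "\<exists>C l E. C \<subseteq> S \<and> finite C \<and> card C = 2 \<and> l > 0 \<and> E \<in> level F l
      \<and> captures w F n r l E C"
    using capturing[unfolded n_capturing_def, rule_format, OF conjI[OF S(1,2)]] by blast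
  then obtain C l E where C: "C \<subseteq> S" "card C = 2" "E \<in> level F l" "captures w F n r l E C"
    by blast
  then obtain Fs R cs where l: "l \<ge> 1" and dc: "decomp w F n r (l - 1) E Fs R"
    and cs: "distinct cs" "set cs = C"
    and cs_sub: "\<And>i. i < length cs \<Longrightarrow> cs!i \<subseteq> Fs!i"
    and cs_map: "\<And>i. i < length cs \<Longrightarrow> \<exists>\<phi>. incr_bij w \<phi> (Fs!0) (Fs!i) \<and> \<phi> ` (cs!0) = cs!i"
    unfolding captures_def by blast
  have len: "length cs = 2" using distinct_card[OF cs(1)] cs(2) C(2) by simp
  obtain \<phi> where \<phi>: "incr_bij w \<phi> (Fs!0) (Fs!1)" "\<phi> ` (cs!0) = cs!1" using cs_map[of 1] len by auto
  have E: "E \<in> level F (Suc (l - 1))" using C(3) l by simp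
  then have h: "halving (l - 1) E Fs R \<phi>" using dc \<phi>(1) unfolding halving_def by blast
  have S01: "cs!0 \<in> S" "cs!1 \<in> S" using cs(2) C(1) len nth_mem[of 0 cs] nth_mem[of 1 cs] by auto
  have "cs!0 \<noteq> cs!1" using cs(1) len by (simp add: nth_eq_iff_index_eq)
  then have disj: "cs!0 \<inter> cs!1 = {}" using S(3) S01 unfolding pairwise_def disjnt_def by blast
  have root: "R \<subseteq> Fs!0" using decomp_halves(5)[OF dc] by blast
  have "x \<in> cs!1" if "x \<in> cs!0" "x \<in> R" for x
    using halving_root_fixed[OF h that(2)] \<phi>(2) that(1) by force
  then have "cs!0 \<inter> R = {}" using disj by blast
  moreover have "cs!1 \<inter> R = {}"
  proof -
    have "x \<in> cs!0" if "x \<in> cs!1" "x \<in> R" for x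
    proof -
      have "x \<in> \<phi> ` (cs!0)" using that(1) \<phi>(2) by simp
      then obtain u where "u \<in> cs!0" "x = \<phi> u" by blast
      then have "u \<in> cs!0" "\<phi> u = \<phi> x" using halving_root_fixed[OF h that(2)] by simp_all
      moreover have "inj_on \<phi> (Fs!0)" using \<phi>(1) unfolding incr_bij_def bij_betw_def by blast
      ultimately show ?thesis
        using that(2) root cs_sub[of 0] len by (metis inj_onD subsetD zero_less_numeral)
    qed
    then show ?thesis using disj by blast
  qed
  ultimately show ?thesis
    using that[OF S01 h] cs_sub[of 0] cs_sub[of 1] \<phi>(2) len by auto
qed

end

section \<open>Homogeneous pairs from uncountable families of frames\<close>

datatype 'a frame = Frame (hull: "'a set") (lo: "'a set") (hi: "'a set")

locale disjoint_family = capturing_scheme +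
  fixes AA :: "'a set set"
  assumes omega1: "omega1_order w"
    and AA_sub: "\<And>a. a \<in> AA \<Longrightarrow> finite a \<and> a \<subseteq> Field w"
    and AA_uncountable: "\<not> countable AA"
    and AA_disjoint: "pairwise disjnt AA"
    and AA_nonempty: "{} \<notin> AA"
begin

definition admissible :: "'a frame \<Rightarrow> bool" where
  "admissible p \<longleftrightarrow> lo p \<in> AA \<and> hi p \<in> AA \<and> set_lt w (lo p) (hi p)
     \<and> lo p \<union> hi p \<subseteq> hull p \<and> finite (hull p) \<and> hull p \<subseteq> Field w"

definition frame_family :: "'a frame set \<Rightarrow> bool" where
  "frame_family T \<longleftrightarrow>
     \<not> countable T \<and> pairwise (\<lambda>p q. disjnt (hull p) (hull q)) T \<and> (\<forall>p\<in>T. admissible p)"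

definition coloured :: "nat \<Rightarrow> 'a frame \<Rightarrow> bool" where
  "coloured c p \<longleftrightarrow> (\<forall>\<alpha>\<in>lo p. \<forall>\<beta>\<in>hi p. \<forall>j\<ge>rho \<alpha> \<beta>. steps j \<alpha> \<beta> = c)"

lemma admissible_hull_nonempty: "admissible p \<Longrightarrow> hull p \<noteq> {}"
  unfolding admissible_def by (metis AA_nonempty Un_empty subset_empty)

lemma frame_family_if_avoiding:
  assumes "\<And>Z. countable Z \<Longrightarrow> \<exists>p. admissible p \<and> P p \<and> hull p \<inter> Z = {}"
  obtains T where "frame_family T" "\<forall>p\<in>T. P p"
proof -
  have ne: "\<And>p. p \<in> {p. admissible p \<and> P p} \<Longrightarrow> hull p \<noteq> {} \<and> countable (hull p)"
    using admissible_hull_nonempty unfolding admissible_def by (auto intro: countable_finite)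
  have avoid: "\<And>Z. countable Z \<Longrightarrow> \<exists>p\<in>{p. admissible p \<and> P p}. hull p \<inter> Z = {}"
    using assms by blast
  obtain T where "T \<subseteq> {p. admissible p \<and> P p}" "\<not> countable T"
    "pairwise (\<lambda>p q. disjnt (hull p) (hull q)) T"
    by (rule uncountable_disjoint_subfamily[OF ne avoid])
  then show ?thesis using that unfolding frame_family_def by blast
qed

lemma AA_avoiding:
  assumes "countable D"
  shows "\<exists>a\<in>AA. a \<inter> D = {}"
proof -
  have "\<not> countable {a\<in>AA. a \<inter> D = {}}"
    using uncountable_avoiding_disjoint[of "\<lambda>a. a" AA D] AA_disjoint assms AA_uncountable by simp
  then have "{a\<in>AA. a \<inter> D = {}} \<noteq> {}" by (metis countable_empty)
  then show ?thesis by blast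
qed

text \<open>This is where \<open>omega1_order\<close> is needed: the initial segments below the finite set
  \<open>a\<close> are countable, so some member of \<open>AA\<close> lies entirely above \<open>a\<close>.\<close>

lemma frame_family_exists: obtains T where "frame_family T"
proof (rule frame_family_if_avoiding[where P = "\<lambda>_. True"])
  fix Z :: "'a set" assume Z: "countable Z"
  obtain a where a: "a \<in> AA" "a \<inter> Z = {}" using AA_avoiding[OF Z] by blast
  define D where "D = Z \<union> (\<Union>x\<in>a. insert x (underS w x))"
  have "countable (underS w x)" if "x \<in> a" for x
    using omega1 AA_sub[OF a(1)] that unfolding omega1_order_def by blast
  then have "countable D" unfolding D_def using Z AA_sub[OF a(1)] countable_finite by auto
  then obtain b where b: "b \<in> AA" "b \<inter> D = {}" using AA_avoiding by blast
  have "set_lt w a b"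
    unfolding set_lt_def
  proof (intro ballI)
    fix x y assume xy: "x \<in> a" "y \<in> b"
    then have "y \<noteq> x" "y \<notin> underS w x" using b(2) unfolding D_def by auto
    moreover have "x \<in> Field w" "y \<in> Field w" using AA_sub a(1) b(1) xy by auto
    ultimately show "olt w x y" using olt_total[OF wo] unfolding underS_def olt_def by blast
  qed
  then have "admissible (Frame (a \<union> b) a b)" unfolding admissible_def using a b AA_sub by auto
  moreover have "(a \<union> b) \<inter> Z = {}" using a b unfolding D_def by blast
  ultimately show "\<exists>p. admissible p \<and> True \<and> hull p \<inter> Z = {}" by force
qed

text \<open>Frames whose hulls have the same shape, i.e. the same positions of \<open>lo\<close> and \<open>hi\<close>
  inside the hull, form an uncountable subfamily; capturing two of them makes the increasing
  bijection between the halves carry \<open>lo\<close> to \<open>lo\<close> and \<open>hi\<close> to \<open>hi\<close>.\<close>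

lemma frames_captured:
  assumes T: "frame_family T" and Z: "countable Z"
  obtains p0 p1 k E Fs R \<phi> where "p0 \<in> T" "p1 \<in> T" "hull p0 \<inter> Z = {}" "hull p1 \<inter> Z = {}"
    "halving k E Fs R \<phi>" "hull p0 \<subseteq> Fs!0 - R" "hull p1 \<subseteq> Fs!1 - R"
    "\<phi> ` lo p0 = lo p1" "\<phi> ` hi p0 = hi p1"
proof -
  have disj: "pairwise (\<lambda>p q. disjnt (hull p) (hull q)) T" and adm: "\<And>p. p \<in> T \<Longrightarrow> admissible p"
    using T unfolding frame_family_def by auto
  define TZ where "TZ = {p\<in>T. hull p \<inter> Z = {}}"
  have "\<not> countable TZ"
    unfolding TZ_def using uncountable_avoiding_disjoint[OF disj Z] T unfolding frame_family_def by blast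
  define shape where "shape p = (pos w (hull p) ` lo p, pos w (hull p) ` hi p)" for p
  have fin: "finite (lo p) \<and> finite (hi p)" if "p \<in> TZ" for p
    using adm[of p] that finite_subset unfolding TZ_def admissible_def by (metis Un_subset_iff mem_Collect_eq)
  have "shape ` TZ \<subseteq> Collect finite \<times> Collect finite"
    unfolding shape_def using fin by auto
  moreover have "countable (Collect finite \<times> Collect finite :: (nat set \<times> nat set) set)"
    using countable_Collect_finite by (intro countable_SIGMA) auto
  ultimately have "countable (shape ` TZ)" by (rule countable_subset)
  then obtain v where "\<not> countable {p\<in>TZ. shape p = v}"
    using uncountable_fiber \<open>\<not> countable TZ\<close> by blast
  moreover define T' where "T' = {p\<in>TZ. shape p = v}"
  ultimately have "\<not> countable T'" by simp
  have T'T: "T' \<subseteq> T" unfolding T'_def TZ_def by blast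
  have "inj_on hull T'"
  proof (rule inj_onI, rule ccontr)
    fix p q assume pq: "p \<in> T'" "q \<in> T'" "hull p = hull q" "p \<noteq> q"
    then have "disjnt (hull p) (hull q)" using disj T'T unfolding pairwise_def by blast
    then show False using pq admissible_hull_nonempty[OF adm] T'T by (auto simp: disjnt_def)
  qed
  have "\<forall>s\<in>hull ` T'. finite s \<and> s \<subseteq> Field w"
    using adm T'T unfolding admissible_def by blast
  moreover have "\<not> countable (hull ` T')" using \<open>inj_on hull T'\<close> \<open>\<not> countable T'\<close> countable_image_inj_on by blast
  moreover have "pairwise disjnt (hull ` T')"
    using pairwise_subset[OF disj T'T] by (auto simp: pairwise_def)
  ultimately obtain s0 s1 k E Fs R \<phi> where s: "s0 \<in> hull ` T'" "s1 \<in> hull ` T'"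
    and h: "halving k E Fs R \<phi>" and "s0 \<subseteq> Fs!0 - R" "s1 \<subseteq> Fs!1 - R" "\<phi> ` s0 = s1"
    by (rule capture_disjoint_pair)
  moreover obtain p0 p1 where p: "p0 \<in> T'" "p1 \<in> T'" "s0 = hull p0" "s1 = hull p1"
    using s by blast
  ultimately have sub: "hull p0 \<subseteq> Fs!0 - R" "hull p1 \<subseteq> Fs!1 - R" and \<phi>: "\<phi> ` hull p0 = hull p1"
    by simp_all
  have "incr_bij w \<phi> (Fs!0) (Fs!1)" using h unfolding halving_def by blast
  moreover have "hull p0 \<subseteq> Fs!0" using sub(1) by blast
  ultimately have \<phi>_hull: "incr_bij w \<phi> (hull p0) (hull p1)"
    using incr_bij_restrict \<phi> by metis
  have adm01: "admissible p0" "admissible p1" using adm p T'T by auto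
  have "shape p0 = shape p1" using p unfolding T'_def by simp
  then have lo_hi: "\<phi> ` lo p0 = lo p1" "\<phi> ` hi p0 = hi p1"
    using incr_bij_image_eq_if_pos_eq[OF wo \<phi>_hull] adm01
    unfolding shape_def admissible_def by auto
  have "p0 \<in> T" "p1 \<in> T" using p T'T by auto
  moreover have "hull p0 \<inter> Z = {}" "hull p1 \<inter> Z = {}" using p unfolding T'_def TZ_def by auto
  ultimately show ?thesis using h sub lo_hi by (rule that)
qed

lemma coloured_frame_family_from_halvings:
  assumes T: "frame_family T"
    and new: "\<And>p0 p1 k E Fs R \<phi>. p0 \<in> T \<Longrightarrow> p1 \<in> T \<Longrightarrow> halving k E Fs R \<phi> \<Longrightarrow>
      hull p0 \<subseteq> Fs!0 - R \<Longrightarrow> hull p1 \<subseteq> Fs!1 - R \<Longrightarrow> \<phi> ` lo p0 = lo p1 \<Longrightarrow> \<phi> ` hi p0 = hi p1 \<Longrightarrow>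
      \<exists>a\<in>{lo p0, hi p0}. \<exists>b\<in>{lo p1, hi p1}. coloured c (Frame (hull p0 \<union> hull p1) a b)"
  obtains T' where "frame_family T'" "\<forall>p\<in>T'. coloured c p"
proof (rule frame_family_if_avoiding)
  fix Z :: "'a set" assume "countable Z"
  then obtain p0 p1 k E Fs R \<phi> where p: "p0 \<in> T" "p1 \<in> T"
    and Z: "hull p0 \<inter> Z = {}" "hull p1 \<inter> Z = {}" and h: "halving k E Fs R \<phi>"
    and sub: "hull p0 \<subseteq> Fs!0 - R" "hull p1 \<subseteq> Fs!1 - R"
    and \<phi>: "\<phi> ` lo p0 = lo p1" "\<phi> ` hi p0 = hi p1"
    using frames_captured[OF T] by metis
  obtain a b where ab: "a \<in> {lo p0, hi p0}" "b \<in> {lo p1, hi p1}"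
    and col: "coloured c (Frame (hull p0 \<union> hull p1) a b)"
    using new[OF p h sub \<phi>] by blast
  have adm: "admissible p0" "admissible p1" using T p unfolding frame_family_def by auto
  have "a \<subseteq> Fs!0 - R" "b \<subseteq> Fs!1 - R" using ab adm sub unfolding admissible_def by auto
  then have "set_lt w a b"
    using decomp_order(2) h unfolding halving_def set_lt_def by blast
  then have "admissible (Frame (hull p0 \<union> hull p1) a b)"
    using ab adm unfolding admissible_def by auto
  then show "\<exists>p. admissible p \<and> coloured c p \<and> hull p \<inter> Z = {}" using col Z by force
qed

lemma coloured_zero_frame_family:
  assumes "frame_family T"
  obtains T' where "frame_family T'" "\<forall>p\<in>T'. coloured 0 p"
proof (rule coloured_frame_family_from_halvings[OF assms])
  fix p0 p1 :: "'a frame" and k E Fs R \<phi>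
  assume p: "p0 \<in> T" "p1 \<in> T" and h: "halving k E Fs R \<phi>"
    and sub: "hull p0 \<subseteq> Fs!0 - R" "hull p1 \<subseteq> Fs!1 - R" and \<phi>: "\<phi> ` hi p0 = hi p1"
  have adm: "admissible p0" "admissible p1" using assms p unfolding frame_family_def by auto
  have "steps j \<alpha> \<beta> = 0" if \<alpha>: "\<alpha> \<in> lo p0" and \<beta>: "\<beta> \<in> hi p1" and j: "j \<ge> rho \<alpha> \<beta>" for \<alpha> \<beta> j
  proof -
    have "\<beta> \<in> \<phi> ` hi p0" using \<beta> \<phi> by simp
    then obtain \<eta> where \<eta>: "\<eta> \<in> hi p0" "\<phi> \<eta> = \<beta>" by blast
    have in_halves: "\<alpha> \<in> Fs!0 - R" "\<beta> \<in> Fs!1 - R" "\<eta> \<in> Fs!0" and "olt w \<alpha> \<eta>"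
      using \<alpha> \<eta> \<beta> adm sub unfolding admissible_def set_lt_def by auto
    have "rho \<alpha> \<beta> = Suc k" using rho_halves in_halves h unfolding halving_def by blast
    then obtain j' where "j = Suc j'" using j by (cases j) auto
    then show ?thesis using steps_halves(2)[OF h in_halves \<eta>(2) \<open>olt w \<alpha> \<eta>\<close>] by simp
  qed
  then show "\<exists>a\<in>{lo p0, hi p0}. \<exists>b\<in>{lo p1, hi p1}. coloured 0 (Frame (hull p0 \<union> hull p1) a b)"
    unfolding coloured_def by force
qed

lemma coloured_Suc_frame_family:
  assumes T: "frame_family T" and col: "\<forall>p\<in>T. coloured c p"
  obtains T' where "frame_family T'" "\<forall>p\<in>T'. coloured (Suc c) p"
proof (rule coloured_frame_family_from_halvings[OF T])
  fix p0 p1 :: "'a frame" and k E Fs R \<phi>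
  assume p: "p0 \<in> T" "p1 \<in> T" and h: "halving k E Fs R \<phi>"
    and sub: "hull p0 \<subseteq> Fs!0 - R" "hull p1 \<subseteq> Fs!1 - R" and \<phi>: "\<phi> ` lo p0 = lo p1"
  have adm: "admissible p0" "admissible p1" using T p unfolding frame_family_def by auto
  have E: "E \<in> level F (Suc k)" and dc: "decomp w F n r k E Fs R" using h unfolding halving_def by auto
  have "steps j \<alpha> \<beta> = Suc c" if \<alpha>: "\<alpha> \<in> hi p0" and \<beta>: "\<beta> \<in> lo p1" and j: "j \<ge> rho \<alpha> \<beta>" for \<alpha> \<beta> j
  proof -
    have "\<beta> \<in> \<phi> ` lo p0" using \<beta> \<phi> by simp
    then obtain \<mu> where \<mu>: "\<mu> \<in> lo p0" "\<phi> \<mu> = \<beta>" by blast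
    have in_halves: "\<alpha> \<in> Fs!0 - R" "\<beta> \<in> Fs!1 - R" "\<mu> \<in> Fs!0" and "olt w \<mu> \<alpha>"
      using \<alpha> \<mu> \<beta> adm sub unfolding admissible_def set_lt_def by auto
    obtain j' where j': "j = Suc j'" "k \<le> j'"
      using j rho_halves[OF E dc in_halves(1,2)] by (cases j) auto
    have "rho \<mu> \<alpha> \<le> j'"
      using rho_le[OF decomp_halves(2)[OF dc] in_halves(3)] in_halves(1) j'(2) by fastforce
    then have "steps j' \<mu> \<alpha> = c" using col p(1) \<mu>(1) \<alpha> unfolding coloured_def by blast
    then show ?thesis
      using steps_halves(1)[OF h in_halves \<mu>(2) \<open>olt w \<mu> \<alpha>\<close>] j'(1) by simp
  qed
  then show "\<exists>a\<in>{lo p0, hi p0}. \<exists>b\<in>{lo p1, hi p1}. coloured (Suc c) (Frame (hull p0 \<union> hull p1) a b)"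
    unfolding coloured_def by force
qed

lemma coloured_frame_family_exists: obtains T where "frame_family T" "\<forall>p\<in>T. coloured c p"
proof (induction c arbitrary: thesis)
  case 0
  then show ?case using frame_family_exists coloured_zero_frame_family by metis
next
  case (Suc c)
  then show ?case using coloured_Suc_frame_family by metis
qed

lemma colouring_homogeneous: "\<exists>a\<in>AA. \<exists>b\<in>AA. set_lt w a b \<and> (\<forall>\<alpha>\<in>a. \<forall>\<beta>\<in>b. colouring {\<alpha>, \<beta>} = c)"
proof -
  obtain T where T: "frame_family T" "\<forall>p\<in>T. coloured c p" by (rule coloured_frame_family_exists)
  then obtain p where p: "p \<in> T" unfolding frame_family_def by (metis countable_empty ex_in_conv)
  then have adm: "admissible p" using T unfolding frame_family_def by blast
  have "colouring {\<alpha>, \<beta>} = c" if "\<alpha> \<in> lo p" "\<beta> \<in> hi p" for \<alpha> \<beta>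
    using that adm T(2) p colouring_eq unfolding admissible_def set_lt_def coloured_def by auto
  then show ?thesis using adm unfolding admissible_def by blast
qed

end

theorem mainTheorem9:
  fixes w :: "'a rel"
  assumes "omega1_order w"
    and "CA 2 w"
  shows "\<exists>col :: 'a set \<Rightarrow> nat.
           \<forall>AA. (\<forall>a\<in>AA. finite a \<and> a \<subseteq> Field w) \<and> \<not> countable AA \<and> pairwise disjnt AA \<longrightarrow>
             (\<forall>k::nat. \<exists>a\<in>AA. \<exists>b\<in>AA. set_lt w a b \<and>
                (\<forall>\<alpha>\<in>a. \<forall>\<beta>\<in>b. col {\<alpha>, \<beta>} = k))"
proof -
  obtain F where F: "construction_scheme w F size_seq (\<lambda>_. 2) root_seq"
    "n_capturing 2 w F (\<lambda>_. 2) root_seq"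
    using assms(2) is_type_binary unfolding CA_def by force
  interpret capturing_scheme w F size_seq "\<lambda>_. 2" root_seq
    using assms(1) F is_type_binary by unfold_locales (auto simp: omega1_order_def)
  show ?thesis
  proof (intro exI allI impI)
    fix AA :: "'a set set" and k :: nat
    assume AA: "(\<forall>a\<in>AA. finite a \<and> a \<subseteq> Field w) \<and> \<not> countable AA \<and> pairwise disjnt AA"
    interpret disjoint_family w F size_seq "\<lambda>_. 2" root_seq "AA - {{}}"
      using assms(1) AA by unfold_locales (auto intro: pairwise_subset)
    show "\<exists>a\<in>AA. \<exists>b\<in>AA. set_lt w a b \<and> (\<forall>\<alpha>\<in>a. \<forall>\<beta>\<in>b. colouring {\<alpha>, \<beta>} = k)"
      using colouring_homogeneous by blast
  qed
qed

end
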